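(* Let $a,b,c,d\ge1$ be integers and let $$M=\begin{bmatrix}a&-1&-1&-1\\-1&b&-1&-1\\-1&-1&c&-1\\-1&-1&-1&d\end{bmatrix}.$$ If $\det M=0$ and $\min\{a,b,c,d\}=3$, then $a=b=c=d=3$. *)

theory Defs
  imports "HOL-Analysis.Analysis"
begin

definition Mmat :: "int \<Rightarrow> int \<Rightarrow> int \<Rightarrow> int \<Rightarrow> int^4^4" where
  "Mmat a b c d = vector [vector [a, -1, -1, -1],
                          vector [-1, b, -1, -1],
                          vector [-1, -1, c, -1],
                          vector [-1, -1, -1, d]]"

end

theory Submission
  imports Defs
begin

(* With x = a + 1, ..., w = d + 1 the determinant is xyzw (1 - 1/x - 1/y - 1/z - 1/w).
   If the minimum of a, b, c, d is 3, then x, y, z, w \<ge> 4, so each reciprocal is at most 1/4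
   and the determinant can only vanish when all four are equal to 4. *)

lemma det_Mmat:
  "det (Mmat a b c d) =
     (a+1)*(b+1)*(c+1)*(d+1) - (b+1)*(c+1)*(d+1) - (a+1)*(c+1)*(d+1)
       - (a+1)*(b+1)*(d+1) - (a+1)*(b+1)*(c+1)"
proof -
  have "finite {2::4, 3, 4}" "1 \<notin> {2::4, 3, 4}"
    and "finite {3::4, 4}" "2 \<notin> {3::4, 4}"
    and "finite {4::4}" "3 \<notin> {4::4}" by auto
  note expand = sum_over_permutations_insert[OF this(1,2)]
    sum_over_permutations_insert[OF this(3,4)] sum_over_permutations_insert[OF this(5,6)]
  show ?thesis
    unfolding det_def UNIV_4 expand permutes_sing
    by (simp add: sign_swap_id permutation_swap_id sign_compose swap_id_eq permutation_compose
        Mmat_def vector_def algebra_simps)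
qed

lemma all_eq_4_if_product_eq_sum_of_triple_products:
  fixes x y z w :: "'a::linordered_idom"
  assumes "x \<ge> 4" "y \<ge> 4" "z \<ge> 4" "w \<ge> 4"
    and "x*y*z*w = y*z*w + x*z*w + x*y*w + x*y*z"
  shows "x = 4 \<and> y = 4 \<and> z = 4 \<and> w = 4"
proof -
  have pos: "y*z*w > 0" "x*z*w > 0" "x*y*w > 0" "x*y*z > 0"
    using assms(1-4) by simp_all
  (* the left-hand side equals 4 (xyzw - yzw - xzw - xyw - xyz) *)
  have sum_zero: "(x-4)*(y*z*w) + (y-4)*(x*z*w) + (z-4)*(x*y*w) + (w-4)*(x*y*z) = 0"
    using assms(5) by (simp add: algebra_simps)
  have "(x-4)*(y*z*w) \<ge> 0" "(y-4)*(x*z*w) \<ge> 0" "(z-4)*(x*y*w) \<ge> 0" "(w-4)*(x*y*z) \<ge> 0"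
    using assms(1-4) pos by simp_all
  then have "(x-4)*(y*z*w) = 0" "(y-4)*(x*z*w) = 0" "(z-4)*(x*y*w) = 0" "(w-4)*(x*y*z) = 0"
    using sum_zero by linarith+
  then show ?thesis
    using pos by auto
qed

theorem lemma3p6:
  fixes a b c d :: int
  assumes "a \<ge> 1" "b \<ge> 1" "c \<ge> 1" "d \<ge> 1"
    and "det (Mmat a b c d) = 0"
    and "Min {a, b, c, d} = 3"
  shows "a = 3 \<and> b = 3 \<and> c = 3 \<and> d = 3"
proof -
  have "a \<ge> 3" "b \<ge> 3" "c \<ge> 3" "d \<ge> 3"
    using assms(6) by (simp_all add: min_def split: if_splits)
  moreover have "(a+1)*(b+1)*(c+1)*(d+1) =
      (b+1)*(c+1)*(d+1) + (a+1)*(c+1)*(d+1) + (a+1)*(b+1)*(d+1) + (a+1)*(b+1)*(c+1)"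
    using assms(5) unfolding det_Mmat by linarith
  ultimately have "a+1 = 4 \<and> b+1 = 4 \<and> c+1 = 4 \<and> d+1 = 4"
    by (intro all_eq_4_if_product_eq_sum_of_triple_products) simp_all
  then show ?thesis
    by simp
qed

end
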